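(* Let $1\le\ell\le n$ and fix $m$ with $0\le m\le\ell$. For every $v\in\bigoplus_{s=0}^m\mathcal{Y}_s$, \[\sum_{i,j=1}^n\mathbf{V}_{ij}(v)\ge\big((\ell-m)n-\ell^2\big)\|v\|^2.\]
   Context: Vectors in $\mathbb{R}^{\binom{n}{\ell}}$ are indexed by $\ell$-subsets of $[n]$. For a sequence $\varphi=(a_1,b_1,\ldots,a_s,b_s)$ of $2s$ distinct elements of $[n]$, $u^\varphi_S=\prod_{i=1}^s(\mathbf{1}_{a_i\in S}-\mathbf{1}_{b_i\in S})$ for $|S|=\ell$ ($u^\varnothing$ is the all-ones vector), and $\mathcal{Y}_s=\mathrm{span}\{u^\varphi:|\varphi|=2s\}$. The voting matrix $\mathbf{V}(v)$ is the symmetric $n\times n$ matrix with $\mathbf{V}_{ii}(v)=0$ and $\mathbf{V}_{ij}(v)=\frac12\sum_{|S|=|T|=\ell}v_Sv_T\mathbf{1}_{S\triangle T=\{i,j\}}$ for $i\ne j$. *)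

theory Defs
  imports "HOL-Analysis.Analysis"
begin

text \<open>Vectors in R^(n choose l) are functions from nat sets to reals; only the values
on l-subsets of {1..n} matter (and the u-vectors vanish elsewhere).\<close>

definition lsubsets :: "nat \<Rightarrow> nat \<Rightarrow> nat set set" where
  "lsubsets n l = {S. S \<subseteq> {1..n} \<and> card S = l}"

definition ind :: "bool \<Rightarrow> real" where
  "ind b = (if b then 1 else 0)"

text \<open>phi = [a_1, b_1, ..., a_s, b_s] as a list of length 2s.\<close>
definition uvec :: "nat \<Rightarrow> nat \<Rightarrow> nat list \<Rightarrow> nat set \<Rightarrow> real" where
  "uvec n l phi S = (if S \<in> lsubsets n l then
      (\<Prod>i<length phi div 2. ind (phi ! (2*i) \<in> S) - ind (phi ! (2*i+1) \<in> S)) else 0)"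

definition seqs :: "nat \<Rightarrow> nat \<Rightarrow> nat list set" where
  "seqs n s = {phi. length phi = 2 * s \<and> distinct phi \<and> (set phi \<subseteq> {1..n})}"

definition fspan :: "('a \<Rightarrow> real) set \<Rightarrow> ('a \<Rightarrow> real) set" where
  "fspan A = {v. \<exists>F c. finite F \<and> F \<subseteq> A \<and> v = (\<lambda>x. \<Sum>u\<in>F. c u * u x)}"

definition Ysp :: "nat \<Rightarrow> nat \<Rightarrow> nat \<Rightarrow> (nat set \<Rightarrow> real) set" where
  "Ysp n l s = fspan (uvec n l ` seqs n s)"

definition Ysum :: "nat \<Rightarrow> nat \<Rightarrow> nat \<Rightarrow> (nat set \<Rightarrow> real) set" where
  "Ysum n l m = fspan (\<Union>s\<in>{0..m}. Ysp n l s)"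

definition voting :: "nat \<Rightarrow> nat \<Rightarrow> (nat set \<Rightarrow> real) \<Rightarrow> nat \<Rightarrow> nat \<Rightarrow> real" where
  "voting n l v i j = (if i = j then 0 else
     (1/2) * (\<Sum>S\<in>lsubsets n l. \<Sum>T\<in>lsubsets n l.
        v S * v T * ind (S - T \<union> (T - S) = {i, j})))"

definition sqnorm :: "nat \<Rightarrow> nat \<Rightarrow> (nat set \<Rightarrow> real) \<Rightarrow> real" where
  "sqnorm n l v = (\<Sum>S\<in>lsubsets n l. (v S)^2)"

end

theory Submission
  imports Defs "HOL-Combinatorics.Transposition"
begin

(* The sum of the entries of V(v) is half of <v, A v>, where A S T counts the ordered pairs
   (i, j), i \<noteq> j, with S \<triangle> T = {i, j}, i.e. A is twice the adjacency matrix of the Johnson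
   graph J(n, l). Each u^phi with |phi| = 2s is an eigenvector of A for the eigenvalue
   2((l - s)(n - l - s) - s): if S does not split some pair {a_k, b_k} of phi, the transposition
   of that pair fixes S and negates u^phi, so the terms of (A u^phi) S cancel; otherwise the flips
   exchanging a point of S outside phi with a point of [n] - S outside phi keep the value u^phi S,
   the s flips along a pair of phi negate it, and every other flip leaves the support of u^phi.
   Since A is symmetric, eigenvectors for distinct eigenvalues are orthogonal, so on
   Y_0 + ... + Y_m the quadratic form is at least the least eigenvalue times |v|^2, and
   (l - s)(n - l - s) - s \<ge> (l - m) n - l^2 for s \<le> m. *)

definition kernel_apply :: "'a set \<Rightarrow> ('a \<Rightarrow> 'a \<Rightarrow> real) \<Rightarrow> ('a \<Rightarrow> real) \<Rightarrow> 'a \<Rightarrow> real" where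
  "kernel_apply A K w x = (\<Sum>y\<in>A. K x y * w y)"

definition inner_on :: "'a set \<Rightarrow> ('a \<Rightarrow> real) \<Rightarrow> ('a \<Rightarrow> real) \<Rightarrow> real" where
  "inner_on A f g = (\<Sum>x\<in>A. f x * g x)"

definition eigenfun :: "'a set \<Rightarrow> ('a \<Rightarrow> 'a \<Rightarrow> real) \<Rightarrow> real \<Rightarrow> ('a \<Rightarrow> real) \<Rightarrow> bool" where
  "eigenfun A K \<mu> w \<longleftrightarrow> (\<forall>x\<in>A. kernel_apply A K w x = \<mu> * w x)"

lemma kernel_apply_sum: "kernel_apply A K (\<lambda>x. \<Sum>y\<in>F. g y x) x = (\<Sum>y\<in>F. kernel_apply A K (g y) x)"
  unfolding kernel_apply_def by (simp add: sum_distrib_left sum.swap[of _ F])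

lemma kernel_apply_scale: "kernel_apply A K (\<lambda>x. c * f x) x = c * kernel_apply A K f x"
  unfolding kernel_apply_def by (simp add: sum_distrib_left mult.left_commute)

lemma inner_on_sum_left: "inner_on A (\<lambda>x. \<Sum>y\<in>F. g y x) f = (\<Sum>y\<in>F. inner_on A (g y) f)"
  unfolding inner_on_def by (simp add: sum_distrib_right sum.swap[of _ F])

lemma inner_on_sum_right: "inner_on A f (\<lambda>x. \<Sum>y\<in>F. g y x) = (\<Sum>y\<in>F. inner_on A f (g y))"
  unfolding inner_on_def by (simp add: sum_distrib_left sum.swap[of _ F])

lemma inner_on_self_nonneg: "inner_on A f f \<ge> 0"
  unfolding inner_on_def by (simp add: sum_nonneg)

lemma eigenfun_lincomb:
  assumes "\<And>y. y \<in> F \<Longrightarrow> eigenfun A K \<mu> (g y)"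
  shows "eigenfun A K \<mu> (\<lambda>x. \<Sum>y\<in>F. c y * g y x)"
  unfolding eigenfun_def
proof
  fix x assume "x \<in> A"
  then have "kernel_apply A K (\<lambda>x. \<Sum>y\<in>F. c y * g y x) x = (\<Sum>y\<in>F. c y * (\<mu> * g y x))"
    using assms by (simp add: kernel_apply_sum kernel_apply_scale eigenfun_def)
  then show "kernel_apply A K (\<lambda>x. \<Sum>y\<in>F. c y * g y x) x = \<mu> * (\<Sum>y\<in>F. c y * g y x)"
    by (simp add: sum_distrib_left mult.left_commute)
qed

lemma inner_on_kernel_apply_commute:
  assumes "\<And>x y. K x y = K y x"
  shows "inner_on A (kernel_apply A K f) g = inner_on A f (kernel_apply A K g)"
proof -
  have "inner_on A (kernel_apply A K f) g = (\<Sum>x\<in>A. \<Sum>y\<in>A. K x y * f y * g x)"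
    unfolding inner_on_def kernel_apply_def by (simp add: sum_distrib_right)
  also have "\<dots> = (\<Sum>y\<in>A. \<Sum>x\<in>A. K x y * f y * g x)"
    by (rule sum.swap)
  also have "\<dots> = inner_on A f (kernel_apply A K g)"
    unfolding inner_on_def kernel_apply_def by (simp add: sum_distrib_left assms mult_ac)
  finally show ?thesis .
qed

lemma eigenfun_orthogonal:
  assumes "\<And>x y. K x y = K y x" and "eigenfun A K \<mu> f" "eigenfun A K \<mu>' g" "\<mu> \<noteq> \<mu>'"
  shows "inner_on A f g = 0"
proof -
  have "inner_on A (kernel_apply A K f) g = \<mu> * inner_on A f g"
    using assms(2) unfolding eigenfun_def inner_on_def by (simp add: sum_distrib_left mult_ac)
  moreover have "inner_on A f (kernel_apply A K g) = \<mu>' * inner_on A f g"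
    using assms(3) unfolding eigenfun_def inner_on_def by (simp add: sum_distrib_left mult_ac)
  moreover have "inner_on A (kernel_apply A K f) g = inner_on A f (kernel_apply A K g)"
    using assms(1) by (rule inner_on_kernel_apply_commute)
  ultimately show ?thesis
    using assms(4) by simp
qed

text \<open>Grouping the summands of v by eigenvalue splits v into pairwise orthogonal eigenfunctions.\<close>
lemma quadratic_form_ge_min_eigenvalue:
  assumes sym: "\<And>x y. K x y = K y x" and F: "finite F"
    and eig: "\<And>y. y \<in> F \<Longrightarrow> eigenfun A K (\<mu> y) y" and ge: "\<And>y. y \<in> F \<Longrightarrow> c \<le> \<mu> y"
    and v: "v = (\<lambda>x. \<Sum>y\<in>F. a y * y x)"
  shows "c * inner_on A v v \<le> inner_on A v (kernel_apply A K v)"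
proof -
  define M where "M = \<mu> ` F"
  define w where "w m x = (\<Sum>y\<in>{y\<in>F. \<mu> y = m}. a y * y x)" for m x
  have w_eig: "eigenfun A K m (w m)" for m
    unfolding w_def by (rule eigenfun_lincomb) (use eig in auto)
  have v_w: "v = (\<lambda>x. \<Sum>m\<in>M. w m x)"
    unfolding v w_def M_def by (rule ext, rule sum.image_gen[OF F])
  have inner_v_w: "inner_on A v (w m) = inner_on A (w m) (w m)" if "m \<in> M" for m
  proof -
    have "inner_on A v (w m) = (\<Sum>m'\<in>M. if m' = m then inner_on A (w m) (w m) else 0)"
      unfolding v_w inner_on_sum_left
      by (rule sum.cong) (use eigenfun_orthogonal[OF sym w_eig w_eig] in auto)
    then show ?thesis using that F M_def by simp
  qed
  have "inner_on A v (kernel_apply A K v) = (\<Sum>m\<in>M. m * inner_on A v (w m))"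
  proof -
    have "kernel_apply A K v x = (\<Sum>m\<in>M. m * w m x)" if "x \<in> A" for x
      using w_eig that by (simp add: v_w kernel_apply_sum eigenfun_def)
    then have "inner_on A v (kernel_apply A K v) = inner_on A v (\<lambda>x. \<Sum>m\<in>M. m * w m x)"
      unfolding inner_on_def by simp
    then show ?thesis
      by (simp add: inner_on_sum_right) (simp add: inner_on_def sum_distrib_left mult_ac)
  qed
  also have "\<dots> = (\<Sum>m\<in>M. m * inner_on A (w m) (w m))"
    using inner_v_w by simp
  also have "\<dots> \<ge> (\<Sum>m\<in>M. c * inner_on A (w m) (w m))"
    by (intro sum_mono mult_right_mono) (use ge M_def inner_on_self_nonneg in auto)
  also have "(\<Sum>m\<in>M. c * inner_on A (w m) (w m)) = c * inner_on A v v"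
  proof -
    have "inner_on A v v = (\<Sum>m\<in>M. inner_on A v (w m))"
      by (subst (2) v_w) (rule inner_on_sum_right)
    then show ?thesis
      using inner_v_w by (simp add: sum_distrib_left)
  qed
  finally show ?thesis .
qed

lemma finite_lsubsets: "finite (lsubsets n l)"
  unfolding lsubsets_def by (rule finite_subset[of _ "Pow {1..n}"]) auto

definition flip_count :: "nat \<Rightarrow> nat set \<Rightarrow> nat set \<Rightarrow> real" where
  "flip_count n S T = (\<Sum>i\<in>{1..n}. \<Sum>j\<in>{1..n}. if i = j then 0 else ind (sym_diff S T = {i, j}))"

lemma flip_count_sym: "flip_count n S T = flip_count n T S"
proof -
  have "sym_diff S T = sym_diff T S" by blast
  then show ?thesis unfolding flip_count_def by (simp only:)
qed

lemma sum_swap_pairs: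
  "(\<Sum>i\<in>I. \<Sum>j\<in>J. \<Sum>x\<in>A. \<Sum>y\<in>B. f i j x y)
     = (\<Sum>x\<in>A. \<Sum>y\<in>B. \<Sum>i\<in>I. \<Sum>j\<in>J. (f i j x y :: real))"
proof -
  have "(\<Sum>i\<in>I. \<Sum>j\<in>J. \<Sum>x\<in>A. \<Sum>y\<in>B. f i j x y) = (\<Sum>i\<in>I. \<Sum>x\<in>A. \<Sum>j\<in>J. \<Sum>y\<in>B. f i j x y)"
    by (rule sum.cong[OF refl], rule sum.swap)
  also have "\<dots> = (\<Sum>x\<in>A. \<Sum>i\<in>I. \<Sum>j\<in>J. \<Sum>y\<in>B. f i j x y)"
    by (rule sum.swap)
  also have "\<dots> = (\<Sum>x\<in>A. \<Sum>i\<in>I. \<Sum>y\<in>B. \<Sum>j\<in>J. f i j x y)"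
    by (rule sum.cong[OF refl], rule sum.cong[OF refl], rule sum.swap)
  also have "\<dots> = (\<Sum>x\<in>A. \<Sum>y\<in>B. \<Sum>i\<in>I. \<Sum>j\<in>J. f i j x y)"
    by (rule sum.cong[OF refl], rule sum.swap)
  finally show ?thesis .
qed

lemma voting_sum_eq_inner_on:
  "(\<Sum>i=1..n. \<Sum>j=1..n. voting n l v i j)
     = inner_on (lsubsets n l) v (kernel_apply (lsubsets n l) (flip_count n) v) / 2"
proof -
  let ?L = "lsubsets n l"
  let ?e = "\<lambda>i j S T. if i = j then 0 else ind (sym_diff S T = {i, j})"
  have "voting n l v i j = (\<Sum>S\<in>?L. \<Sum>T\<in>?L. v S * v T * ?e i j S T) / 2" for i j
    by (simp add: voting_def)
  then have "(\<Sum>i=1..n. \<Sum>j=1..n. voting n l v i j)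
      = (\<Sum>i=1..n. \<Sum>j=1..n. \<Sum>S\<in>?L. \<Sum>T\<in>?L. v S * v T * ?e i j S T) / 2"
    by (simp add: sum_divide_distrib)
  also have "(\<Sum>i=1..n. \<Sum>j=1..n. \<Sum>S\<in>?L. \<Sum>T\<in>?L. v S * v T * ?e i j S T)
      = (\<Sum>S\<in>?L. \<Sum>T\<in>?L. \<Sum>i=1..n. \<Sum>j=1..n. v S * v T * ?e i j S T)"
    by (rule sum_swap_pairs)
  also have "\<dots> = inner_on ?L v (kernel_apply ?L (flip_count n) v)"
    by (simp add: inner_on_def kernel_apply_def flip_count_def sum_distrib_left sum_distrib_right mult_ac)
  finally show ?thesis .
qed

lemma kernel_apply_flip_count:
  assumes "\<And>X. X \<notin> lsubsets n l \<Longrightarrow> w X = 0"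
  shows "kernel_apply (lsubsets n l) (flip_count n) w S
           = (\<Sum>i\<in>{1..n}. \<Sum>j\<in>{1..n}. if i = j then 0 else w (sym_diff S {i, j}))"
proof -
  have single: "(\<Sum>T\<in>lsubsets n l. ind (sym_diff S T = {i, j}) * w T) = w (sym_diff S {i, j})" for i j
  proof -
    have "(\<Sum>T\<in>lsubsets n l. ind (sym_diff S T = {i, j}) * w T)
        = (\<Sum>T\<in>lsubsets n l. if T = sym_diff S {i, j} then w T else 0)"
      by (rule sum.cong) (auto simp: ind_def)
    then show ?thesis using assms by (simp add: finite_lsubsets)
  qed
  have "kernel_apply (lsubsets n l) (flip_count n) w S
      = (\<Sum>i\<in>{1..n}. \<Sum>j\<in>{1..n}. \<Sum>T\<in>lsubsets n l.
           (if i = j then 0 else ind (sym_diff S T = {i, j})) * w T)"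
    unfolding kernel_apply_def flip_count_def
    by (simp add: sum_distrib_right) (simp only: sum.swap[of _ "lsubsets n l"])
  also have "\<dots> = (\<Sum>i\<in>{1..n}. \<Sum>j\<in>{1..n}. if i = j then 0 else w (sym_diff S {i, j}))"
    by (intro sum.cong refl) (simp add: single)
  finally show ?thesis .
qed

definition seq_a :: "nat list \<Rightarrow> nat \<Rightarrow> nat" where
  "seq_a phi k = phi ! (2 * k)"

definition seq_b :: "nat list \<Rightarrow> nat \<Rightarrow> nat" where
  "seq_b phi k = phi ! (2 * k + 1)"

definition pair_factor :: "nat list \<Rightarrow> nat \<Rightarrow> nat set \<Rightarrow> real" where
  "pair_factor phi k S = ind (seq_a phi k \<in> S) - ind (seq_b phi k \<in> S)"

definition pair_factor_prod :: "nat list \<Rightarrow> nat set \<Rightarrow> real" where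
  "pair_factor_prod phi S = (\<Prod>k<length phi div 2. pair_factor phi k S)"

definition is_pair :: "nat list \<Rightarrow> nat \<Rightarrow> nat \<Rightarrow> bool" where
  "is_pair phi i j \<longleftrightarrow>
     (\<exists>k<length phi div 2. i = seq_a phi k \<and> j = seq_b phi k \<or> i = seq_b phi k \<and> j = seq_a phi k)"

definition splits :: "nat list \<Rightarrow> nat set \<Rightarrow> bool" where
  "splits phi S \<longleftrightarrow> (\<forall>k<length phi div 2. (seq_a phi k \<in> S) \<noteq> (seq_b phi k \<in> S))"

lemma uvec_eq_pair_factor_prod: "uvec n l phi S = (if S \<in> lsubsets n l then pair_factor_prod phi S else 0)"
  unfolding uvec_def pair_factor_prod_def pair_factor_def seq_a_def seq_b_def by simp

lemma seqsD:
  assumes "phi \<in> seqs n s"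
  shows "length phi = 2 * s" "distinct phi" "set phi \<subseteq> {1..n}" "length phi div 2 = s"
    and "\<And>k. k < s \<Longrightarrow> seq_a phi k \<in> set phi \<and> seq_b phi k \<in> set phi"
    and "\<And>x. x \<in> set phi \<Longrightarrow> \<exists>k<s. x = seq_a phi k \<or> x = seq_b phi k"
    and "\<And>k k'. k < s \<Longrightarrow> k' < s \<Longrightarrow> seq_a phi k = seq_a phi k' \<longleftrightarrow> k = k'"
    and "\<And>k k'. k < s \<Longrightarrow> k' < s \<Longrightarrow> seq_b phi k = seq_b phi k' \<longleftrightarrow> k = k'"
    and "\<And>k k'. k < s \<Longrightarrow> k' < s \<Longrightarrow> seq_a phi k \<noteq> seq_b phi k'"
proof -
  show len: "length phi = 2 * s" and dist: "distinct phi" and "set phi \<subseteq> {1..n}"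
    using assms unfolding seqs_def by auto
  then show "length phi div 2 = s" by simp
  show "k < s \<Longrightarrow> seq_a phi k \<in> set phi \<and> seq_b phi k \<in> set phi" for k
    using len unfolding seq_a_def seq_b_def by auto
  show "\<exists>k<s. x = seq_a phi k \<or> x = seq_b phi k" if x: "x \<in> set phi" for x
  proof -
    obtain p where p: "p < 2 * s" "x = phi ! p"
      using x len by (auto simp: in_set_conv_nth)
    have "p = 2 * (p div 2) \<or> p = 2 * (p div 2) + 1" by presburger
    moreover have "p div 2 < s" using p by auto
    ultimately show ?thesis
      using p unfolding seq_a_def seq_b_def by (metis (no_types))
  qed
  show "k < s \<Longrightarrow> k' < s \<Longrightarrow> seq_a phi k = seq_a phi k' \<longleftrightarrow> k = k'"
    and "k < s \<Longrightarrow> k' < s \<Longrightarrow> seq_b phi k = seq_b phi k' \<longleftrightarrow> k = k'" for k k'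
    using dist len unfolding seq_a_def seq_b_def by (auto simp: nth_eq_iff_index_eq)
  show "seq_a phi k \<noteq> seq_b phi k'" if "k < s" "k' < s" for k k'
  proof
    assume "seq_a phi k = seq_b phi k'"
    then have "2 * k = 2 * k' + 1"
      using that dist len unfolding seq_a_def seq_b_def by (simp add: nth_eq_iff_index_eq)
    then show False by presburger
  qed
qed

lemma seq_pairs_disjoint:
  assumes phi: "phi \<in> seqs n s" and "k < s" "k' < s" "k \<noteq> k'"
  shows "{seq_a phi k, seq_b phi k} \<inter> {seq_a phi k', seq_b phi k'} = {}"
  using assms seqsD(7-8)[OF phi, of k k'] seqsD(9)[OF phi, of k k'] seqsD(9)[OF phi, of k' k] by auto

lemma is_pair_iff:
  assumes "phi \<in> seqs n s"
  shows "is_pair phi i j \<longleftrightarrow> (\<exists>k<s. {i, j} = {seq_a phi k, seq_b phi k})"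
  unfolding is_pair_def seqsD(4)[OF assms] doubleton_eq_iff ..

lemma pair_factor_prod_negate:
  assumes "k < length phi div 2" and "pair_factor phi k Y = - pair_factor phi k X"
    and "\<And>k'. k' < length phi div 2 \<Longrightarrow> k' \<noteq> k \<Longrightarrow> pair_factor phi k' Y = pair_factor phi k' X"
  shows "pair_factor_prod phi Y = - pair_factor_prod phi X"
proof -
  let ?K = "{..<length phi div 2} - {k}"
  have "pair_factor_prod phi Y = pair_factor phi k Y * (\<Prod>k'\<in>?K. pair_factor phi k' Y)"
    unfolding pair_factor_prod_def using assms(1) by (simp add: prod.remove)
  also have "(\<Prod>k'\<in>?K. pair_factor phi k' Y) = (\<Prod>k'\<in>?K. pair_factor phi k' X)"
    using assms(3) by (intro prod.cong) auto
  also have "pair_factor phi k Y * \<dots> = - pair_factor_prod phi X"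
    unfolding pair_factor_prod_def assms(2) using assms(1) by (simp add: prod.remove)
  finally show ?thesis .
qed

lemma pair_factor_exchange:
  assumes split: "(seq_a phi k \<in> S) \<noteq> (seq_b phi k \<in> S)" and i: "i \<in> S" and j: "j \<notin> S"
  shows "pair_factor phi k (insert j (S - {i}))
           = (if {seq_a phi k, seq_b phi k} \<inter> {i, j} = {} then pair_factor phi k S
              else if {i, j} = {seq_a phi k, seq_b phi k} then - pair_factor phi k S else 0)"
proof -
  let ?a = "seq_a phi k" and ?b = "seq_b phi k"
  have mem: "x \<in> insert j (S - {i}) \<longleftrightarrow> x = j \<or> x \<in> S \<and> x \<noteq> i" for x
    by blast
  consider (disjoint) "{?a, ?b} \<inter> {i, j} = {}" | (pair) "{i, j} = {?a, ?b}"
    | (meet) "{?a, ?b} \<inter> {i, j} \<noteq> {}" "{i, j} \<noteq> {?a, ?b}"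
    by blast
  then show ?thesis
  proof cases
    case disjoint
    then show ?thesis unfolding pair_factor_def mem by auto
  next
    case pair
    then have "i = ?a \<and> j = ?b \<or> i = ?b \<and> j = ?a"
      by (simp add: doubleton_eq_iff)
    then show ?thesis
      using split i j pair unfolding pair_factor_def mem by (auto simp: ind_def)
  next
    case meet
    then have "i = ?a \<and> j \<noteq> ?b \<or> i = ?b \<and> j \<noteq> ?a \<or> j = ?a \<and> i \<noteq> ?b \<or> j = ?b \<and> i \<noteq> ?a"
      by auto
    then show ?thesis
      using split i j meet unfolding pair_factor_def mem by (auto simp: ind_def)
  qed
qed

lemma pair_factor_prod_exchange:
  assumes phi: "phi \<in> seqs n s" and "splits phi S" and i: "i \<in> S" and j: "j \<notin> S"
  shows "pair_factor_prod phi (insert j (S - {i}))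
           = pair_factor_prod phi S * (ind (i \<notin> set phi \<and> j \<notin> set phi) - ind (is_pair phi i j))"
proof -
  note phi_facts = seqsD[OF phi]
  let ?T = "insert j (S - {i})" and ?ab = "\<lambda>k. {seq_a phi k, seq_b phi k}"
  have factor: "pair_factor phi k ?T = (if ?ab k \<inter> {i, j} = {} then pair_factor phi k S
      else if {i, j} = ?ab k then - pair_factor phi k S else 0)" if "k < s" for k
  proof (rule pair_factor_exchange[OF _ i j])
    show "(seq_a phi k \<in> S) \<noteq> (seq_b phi k \<in> S)"
      using assms(2) that phi_facts(4) unfolding splits_def by blast
  qed
  have pair_in_phi: "i \<in> set phi" if "is_pair phi i j"
    using that phi_facts(5) unfolding is_pair_def phi_facts(4) by blast
  consider (outside) "i \<notin> set phi" "j \<notin> set phi" | (pair) "is_pair phi i j"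
    | (other) "i \<in> set phi \<or> j \<in> set phi" "\<not> is_pair phi i j"
    by blast
  then show ?thesis
  proof cases
    case outside
    then have "?ab k \<inter> {i, j} = {}" if "k < s" for k
      using phi_facts(5)[OF that] by auto
    then have "pair_factor_prod phi ?T = pair_factor_prod phi S"
      unfolding pair_factor_prod_def phi_facts(4) by (intro prod.cong refl) (simp add: factor)
    then show ?thesis using outside pair_in_phi by (auto simp: ind_def)
  next
    case pair
    then obtain k where k: "k < s" "{i, j} = ?ab k"
      unfolding is_pair_iff[OF phi] by blast
    have "pair_factor_prod phi ?T = - pair_factor_prod phi S"
    proof (rule pair_factor_prod_negate)
      show "k < length phi div 2" using k(1) phi_facts(4) by simp
      show "pair_factor phi k ?T = - pair_factor phi k S"
        using factor[OF k(1)] k(2) by simp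
      show "pair_factor phi k' ?T = pair_factor phi k' S" if "k' < length phi div 2" "k' \<noteq> k" for k'
        using that phi_facts(4) factor[of k'] k seq_pairs_disjoint[OF phi, of k' k] by simp
    qed
    then show ?thesis using pair pair_in_phi by (simp add: ind_def)
  next
    case other
    then obtain k where k: "k < s" "?ab k \<inter> {i, j} \<noteq> {}"
      using phi_facts(6) by blast
    moreover have "{i, j} \<noteq> ?ab k"
      using other(2) k(1) unfolding is_pair_iff[OF phi] by blast
    ultimately have "pair_factor phi k ?T = 0"
      using factor[OF k(1)] by auto
    then have "pair_factor_prod phi ?T = 0"
      unfolding pair_factor_prod_def phi_facts(4) using k(1) by (intro prod_zero) auto
    then show ?thesis using other by (auto simp: ind_def)
  qed
qed

lemma uvec_transpose_pair:
  assumes phi: "phi \<in> seqs n s" and k: "k < s"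
  shows "uvec n l phi (Transposition.transpose (seq_a phi k) (seq_b phi k) ` X) = - uvec n l phi X"
proof -
  note phi_facts = seqsD[OF phi]
  let ?t = "Transposition.transpose (seq_a phi k) (seq_b phi k)"
  have ab: "seq_a phi k \<in> {1..n}" "seq_b phi k \<in> {1..n}"
    using phi_facts(3) phi_facts(5)[OF k] by auto
  have "?t ` X \<subseteq> {1..n} \<longleftrightarrow> X \<subseteq> {1..n}"
    using ab by (auto simp: in_transpose_image_iff Transposition.transpose_def split: if_splits)
  moreover have "card (?t ` X) = card X"
    by (simp add: card_image)
  ultimately have in_lsubsets: "?t ` X \<in> lsubsets n l \<longleftrightarrow> X \<in> lsubsets n l"
    unfolding lsubsets_def by auto
  have "pair_factor_prod phi (?t ` X) = - pair_factor_prod phi X"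
  proof (rule pair_factor_prod_negate)
    show "pair_factor phi k (?t ` X) = - pair_factor phi k X"
      unfolding pair_factor_def in_transpose_image_iff by simp
    show "pair_factor phi k' (?t ` X) = pair_factor phi k' X"
      if "k' < length phi div 2" "k' \<noteq> k" for k'
      using that phi_facts(4) seq_pairs_disjoint[OF phi, of k' k] k
      unfolding pair_factor_def in_transpose_image_iff by (simp add: Transposition.transpose_def)
  qed (use k phi_facts(4) in simp)
  then show ?thesis
    unfolding uvec_eq_pair_factor_prod using in_lsubsets by simp
qed

text \<open>If S does not split the k-th pair of phi, the transposition of that pair fixes S
  and negates u^phi, so it pairs off the terms of the flip sum with their negatives.\<close>
lemma flip_sum_eq_0_if_not_splits:
  assumes phi: "phi \<in> seqs n s" and k: "k < s" and S: "(seq_a phi k \<in> S) = (seq_b phi k \<in> S)"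
  shows "(\<Sum>i\<in>{1..n}. \<Sum>j\<in>{1..n}. if i = j then 0 else uvec n l phi (sym_diff S {i, j})) = 0"
proof -
  let ?t = "Transposition.transpose (seq_a phi k) (seq_b phi k)"
  let ?G = "\<lambda>i j. if i = j then 0 else uvec n l phi (sym_diff S {i, j})"
  have bij: "bij_betw ?t {1..n} {1..n}"
    using seqsD(3)[OF phi] seqsD(5)[OF phi k] by (intro bij_betw_transpose_iff) blast
  have "?t ` sym_diff S {i, j} = sym_diff (?t ` S) (?t ` {i, j})" for i j
    by (simp add: image_Un image_set_diff inj_transpose)
  then have "sym_diff S {?t i, ?t j} = ?t ` sym_diff S {i, j}" for i j
    by (simp add: transpose_image_eq[OF S])
  then have G_transpose: "?G (?t i) (?t j) = - ?G i j" for i j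
    using uvec_transpose_pair[OF phi k] by (simp add: inj_eq[OF inj_transpose])
  have reindex: "(\<Sum>i\<in>{1..n}. h i) = (\<Sum>i\<in>{1..n}. h (?t i))" for h :: "nat \<Rightarrow> real"
    using sum.reindex_bij_betw[OF bij, of h] by simp
  have "(\<Sum>i\<in>{1..n}. \<Sum>j\<in>{1..n}. ?G i j) = (\<Sum>i\<in>{1..n}. \<Sum>j\<in>{1..n}. ?G (?t i) (?t j))"
    by (subst reindex, rule sum.cong[OF refl], rule reindex)
  also have "\<dots> = - (\<Sum>i\<in>{1..n}. \<Sum>j\<in>{1..n}. ?G i j)"
    by (simp only: G_transpose sum_negf)
  finally show ?thesis by simp
qed

lemma sum_sum_ind_eq_card:
  assumes "finite A" "finite B"
  shows "(\<Sum>i\<in>A. \<Sum>j\<in>B. ind (P i j)) = real (card {(i, j) \<in> A \<times> B. P i j})"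
proof -
  have "(\<Sum>i\<in>A. \<Sum>j\<in>B. ind (P i j)) = (\<Sum>p\<in>A \<times> B. ind (P (fst p) (snd p)))"
    by (simp add: sum.cartesian_product case_prod_beta)
  also have "\<dots> = real (card {p \<in> A \<times> B. P (fst p) (snd p)})"
    using assms by (simp add: ind_def sum.If_cases Int_def)
  also have "{p \<in> A \<times> B. P (fst p) (snd p)} = {(i, j) \<in> A \<times> B. P i j}"
    by auto
  finally show ?thesis .
qed

lemma card_inter_set_if_splits:
  assumes phi: "phi \<in> seqs n s" and "splits phi S"
  shows "card (S \<inter> set phi) = s"
proof -
  note phi_facts = seqsD[OF phi]
  let ?c = "\<lambda>k. if seq_a phi k \<in> S then seq_a phi k else seq_b phi k"
  have split: "(seq_a phi k \<in> S) \<noteq> (seq_b phi k \<in> S)" if "k < s" for k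
    using assms(2) that phi_facts(4) unfolding splits_def by auto
  have "S \<inter> set phi = ?c ` {..<s}"
  proof
    show "S \<inter> set phi \<subseteq> ?c ` {..<s}"
    proof
      fix x assume x: "x \<in> S \<inter> set phi"
      then obtain k where k: "k < s" "x = seq_a phi k \<or> x = seq_b phi k"
        using phi_facts(6) by blast
      then have "x = ?c k" using x split[OF k(1)] by auto
      then show "x \<in> ?c ` {..<s}" using k by auto
    qed
    show "?c ` {..<s} \<subseteq> S \<inter> set phi"
      using split phi_facts(5) by auto
  qed
  moreover have "inj_on ?c {..<s}"
    unfolding inj_on_def using phi_facts(7-9) by (auto split: if_splits) (metis lessThan_iff)+
  ultimately show ?thesis by (metis card_image card_lessThan)
qed

lemma sym_diff_notin_lsubsets:
  assumes S: "S \<in> lsubsets n l" and "i \<noteq> j" and "i \<in> S \<longleftrightarrow> j \<in> S"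
  shows "sym_diff S {i, j} \<notin> lsubsets n l"
proof -
  have finS: "finite S" and cardS: "card S = l"
    using S finite_subset unfolding lsubsets_def by auto
  have "card (sym_diff S {i, j}) \<noteq> card S"
  proof (cases "i \<in> S")
    case True
    then have "card (sym_diff S {i, j}) < card S"
      using assms(2,3) finS by (intro psubset_card_mono) auto
    then show ?thesis by simp
  next
    case False
    then have "card S < card (sym_diff S {i, j})"
      using assms(2,3) finS by (intro psubset_card_mono) auto
    then show ?thesis by simp
  qed
  then show ?thesis
    using cardS unfolding lsubsets_def by auto
qed

lemma uvec_exchange:
  assumes phi: "phi \<in> seqs n s" and S: "S \<in> lsubsets n l" and "splits phi S"
    and i: "i \<in> S" and j: "j \<in> {1..n}" "j \<notin> S"
  shows "uvec n l phi (sym_diff S {i, j})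
           = pair_factor_prod phi S * (ind (i \<notin> set phi \<and> j \<notin> set phi) - ind (is_pair phi i j))"
proof -
  have Ssub: "S \<subseteq> {1..n}" and cardS: "card S = l" and finS: "finite S"
    using S finite_subset unfolding lsubsets_def by auto
  have eq: "sym_diff S {i, j} = insert j (S - {i})"
    using i j by auto
  have "card (S - {i}) = l - 1" "0 < l"
    using i finS cardS card_gt_0_iff by (auto simp: card_Diff_singleton)
  then have "card (insert j (S - {i})) = l"
    using j finS by (simp add: card_insert_disjoint)
  then have "insert j (S - {i}) \<in> lsubsets n l"
    using i j Ssub unfolding lsubsets_def by auto
  then show ?thesis
    unfolding eq uvec_eq_pair_factor_prod using pair_factor_prod_exchange[OF phi assms(3) i j(2)]
    by simp
qed

lemma uvec_flip_if_splits:
  assumes phi: "phi \<in> seqs n s" and S: "S \<in> lsubsets n l" and "splits phi S"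
    and ij: "i \<in> {1..n}" "j \<in> {1..n}"
  shows "(if i = j then 0 else uvec n l phi (sym_diff S {i, j}))
    = pair_factor_prod phi S * (ind (i \<notin> set phi \<and> j \<notin> set phi \<and> (i \<in> S \<longleftrightarrow> j \<notin> S))
                     - ind (is_pair phi i j))"
proof -
  have pair_crosses: "i \<in> S \<longleftrightarrow> j \<notin> S" if "is_pair phi i j" for i j
    using that assms(3) unfolding is_pair_def splits_def by blast
  consider "i = j" | "i \<noteq> j" "i \<in> S \<longleftrightarrow> j \<in> S" | "i \<in> S" "j \<notin> S" | "i \<notin> S" "j \<in> S"
    by blast
  then show ?thesis
  proof cases
    case 1
    then show ?thesis using pair_crosses[of i i] by (auto simp: ind_def)
  next
    case 2
    then show ?thesis
      using sym_diff_notin_lsubsets[OF S 2] pair_crosses[of i j]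
      by (auto simp: ind_def uvec_eq_pair_factor_prod)
  next
    case 3
    then show ?thesis using uvec_exchange[OF phi S assms(3) 3(1) ij(2) 3(2)] by auto
  next
    case 4
    have "is_pair phi i j = is_pair phi j i" unfolding is_pair_def by blast
    moreover have "{i, j} = {j, i}" "i \<noteq> j" using 4 by auto
    ultimately show ?thesis
      using uvec_exchange[OF phi S assms(3) 4(2) ij(1) 4(1)] 4 by (simp add: conj_commute)
  qed
qed

lemma card_is_pair:
  assumes phi: "phi \<in> seqs n s"
  shows "card {(i, j) \<in> {1..n} \<times> {1..n}. is_pair phi i j} = 2 * s"
proof -
  note phi_facts = seqsD[OF phi]
  let ?ab = "\<lambda>k. (seq_a phi k, seq_b phi k)" and ?ba = "\<lambda>k. (seq_b phi k, seq_a phi k)"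
  have "seq_a phi k \<in> {1..n} \<and> seq_b phi k \<in> {1..n}" if "k < s" for k
    using phi_facts(3) phi_facts(5)[OF that] by blast
  then have "{(i, j) \<in> {1..n} \<times> {1..n}. is_pair phi i j} = ?ab ` {..<s} \<union> ?ba ` {..<s}"
    unfolding is_pair_def phi_facts(4) by auto
  moreover have "inj_on ?ab {..<s}" "inj_on ?ba {..<s}"
    using phi_facts(7,8) by (auto simp: inj_on_def)
  moreover have "?ab ` {..<s} \<inter> ?ba ` {..<s} = {}"
    using phi_facts(9) by auto
  ultimately show ?thesis
    by (simp add: card_Un_disjoint card_image)
qed

definition johnson_eigenvalue :: "nat \<Rightarrow> nat \<Rightarrow> nat \<Rightarrow> real" where
  "johnson_eigenvalue n l s = (real l - real s) * (real n - real l - real s) - real s"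

lemma card_diff_set_if_splits:
  assumes phi: "phi \<in> seqs n s" and S: "S \<in> lsubsets n l" and "splits phi S"
  shows "real (card (S - set phi)) = real l - real s"
    and "real (card ({1..n} - S - set phi)) = real n - real l - real s"
proof -
  let ?P = "set phi"
  have Ssub: "S \<subseteq> {1..n}" and cardS: "card S = l" and finS: "finite S"
    using S finite_subset unfolding lsubsets_def by auto
  have cardSP: "card (S \<inter> ?P) = s"
    using card_inter_set_if_splits[OF phi assms(3)] .
  have cardP: "card ?P = 2 * s"
    using seqsD(1,2)[OF phi] by (simp add: distinct_card)
  have cardSuP: "card (S \<union> ?P) = l + s"
    using card_Un_Int[OF finS, of ?P] cardS cardSP cardP by simp
  have "S \<union> ?P \<subseteq> {1..n}"
    using Ssub seqsD(3)[OF phi] by blast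
  then have "card ({1..n} - (S \<union> ?P)) = n - (l + s)" and "l + s \<le> n"
    using cardSuP card_mono[of "{1..n}" "S \<union> ?P"] by (auto simp: card_Diff_subset finite_subset)
  moreover have "{1..n} - S - ?P = {1..n} - (S \<union> ?P)" by auto
  ultimately show "real (card ({1..n} - S - ?P)) = real n - real l - real s"
    by (simp add: of_nat_diff)
  have "s \<le> l"
    using cardSP cardS finS by (metis card_mono inf_le1)
  then show "real (card (S - ?P)) = real l - real s"
    using cardS cardSP by (simp add: card_Diff_subset_Int finS of_nat_diff)
qed

lemma flip_sum_if_splits:
  assumes phi: "phi \<in> seqs n s" and S: "S \<in> lsubsets n l" and "splits phi S"
  shows "(\<Sum>i\<in>{1..n}. \<Sum>j\<in>{1..n}. if i = j then 0 else uvec n l phi (sym_diff S {i, j}))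
           = 2 * johnson_eigenvalue n l s * pair_factor_prod phi S"
proof -
  let ?P = "set phi" and ?R = "{1..n} - S"
  let ?cross = "\<lambda>i j. i \<notin> ?P \<and> j \<notin> ?P \<and> (i \<in> S \<longleftrightarrow> j \<notin> S)"
  have Ssub: "S \<subseteq> {1..n}" and finS: "finite S"
    using S finite_subset unfolding lsubsets_def by auto
  have "(\<Sum>i\<in>{1..n}. \<Sum>j\<in>{1..n}. if i = j then 0 else uvec n l phi (sym_diff S {i, j}))
      = (\<Sum>i\<in>{1..n}. \<Sum>j\<in>{1..n}. pair_factor_prod phi S * (ind (?cross i j) - ind (is_pair phi i j)))"
    by (intro sum.cong refl) (simp add: uvec_flip_if_splits[OF phi S assms(3)])
  also have "\<dots> = pair_factor_prod phi S * ((\<Sum>i\<in>{1..n}. \<Sum>j\<in>{1..n}. ind (?cross i j))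
                     - (\<Sum>i\<in>{1..n}. \<Sum>j\<in>{1..n}. ind (is_pair phi i j)))"
    by (simp add: sum_distrib_left sum_subtractf right_diff_distrib)
  also have "\<dots> = pair_factor_prod phi S * (real (card {(i, j) \<in> {1..n} \<times> {1..n}. ?cross i j})
                     - real (card {(i, j) \<in> {1..n} \<times> {1..n}. is_pair phi i j}))"
    by (simp only: sum_sum_ind_eq_card finite_atLeastAtMost)
  also have "{(i, j) \<in> {1..n} \<times> {1..n}. ?cross i j} = (S - ?P) \<times> (?R - ?P) \<union> (?R - ?P) \<times> (S - ?P)"
    using Ssub by auto
  also have "card \<dots> = 2 * card (S - ?P) * card (?R - ?P)"
    by (subst card_Un_disjoint) (auto simp: card_cartesian_product finS)
  also have "card {(i, j) \<in> {1..n} \<times> {1..n}. is_pair phi i j} = 2 * s"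
    by (rule card_is_pair[OF phi])
  finally have "(\<Sum>i\<in>{1..n}. \<Sum>j\<in>{1..n}. if i = j then 0 else uvec n l phi (sym_diff S {i, j}))
      = pair_factor_prod phi S * (2 * real (card (S - ?P)) * real (card (?R - ?P)) - 2 * real s)"
    by simp
  then show ?thesis
    unfolding card_diff_set_if_splits[OF phi S assms(3)] johnson_eigenvalue_def
    by (simp add: algebra_simps)
qed

lemma uvec_eigenfun:
  assumes phi: "phi \<in> seqs n s"
  shows "eigenfun (lsubsets n l) (flip_count n) (2 * johnson_eigenvalue n l s) (uvec n l phi)"
  unfolding eigenfun_def
proof
  fix S assume S: "S \<in> lsubsets n l"
  have flips: "kernel_apply (lsubsets n l) (flip_count n) (uvec n l phi) S
      = (\<Sum>i\<in>{1..n}. \<Sum>j\<in>{1..n}. if i = j then 0 else uvec n l phi (sym_diff S {i, j}))"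
    by (rule kernel_apply_flip_count) (simp add: uvec_eq_pair_factor_prod)
  show "kernel_apply (lsubsets n l) (flip_count n) (uvec n l phi) S
          = 2 * johnson_eigenvalue n l s * uvec n l phi S"
  proof (cases "splits phi S")
    case True
    then show ?thesis
      unfolding flips flip_sum_if_splits[OF phi S True] using S by (simp add: uvec_eq_pair_factor_prod)
  next
    case False
    then obtain k where k: "k < s" "(seq_a phi k \<in> S) = (seq_b phi k \<in> S)"
      unfolding splits_def seqsD(4)[OF phi] by auto
    then have "pair_factor phi k S = 0"
      unfolding pair_factor_def by simp
    then have "pair_factor_prod phi S = 0"
      unfolding pair_factor_prod_def seqsD(4)[OF phi] using k(1) by (intro prod_zero) auto
    then show ?thesis
      unfolding flips flip_sum_eq_0_if_not_splits[OF phi k] using S by (simp add: uvec_eq_pair_factor_prod)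
  qed
qed

lemma Ysp_eigenfun:
  assumes "y \<in> Ysp n l s"
  shows "eigenfun (lsubsets n l) (flip_count n) (2 * johnson_eigenvalue n l s) y"
proof -
  obtain F c where F: "F \<subseteq> uvec n l ` seqs n s" "y = (\<lambda>x. \<Sum>u\<in>F. c u * u x)"
    using assms unfolding Ysp_def fspan_def by blast
  have "eigenfun (lsubsets n l) (flip_count n) (2 * johnson_eigenvalue n l s) (\<lambda>x. \<Sum>u\<in>F. c u * u x)"
    by (rule eigenfun_lincomb[where g = "\<lambda>u. u"]) (use F(1) uvec_eigenfun in auto)
  then show ?thesis using F(2) by simp
qed

lemma johnson_eigenvalue_ge:
  assumes "s \<le> m"
  shows "(real l - real m) * real n - (real l)^2 \<le> johnson_eigenvalue n l s"
proof -
  have "real s \<le> real s * real s" by (cases s) auto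
  moreover have "0 \<le> (real m - real s) * real n" using assms by simp
  ultimately show ?thesis
    unfolding johnson_eigenvalue_def by (simp add: algebra_simps power2_eq_square)
qed

theorem lemma7:
  fixes n l m :: nat and v :: "nat set \<Rightarrow> real"
  assumes "1 \<le> l" and "l \<le> n" and "m \<le> l"
    and "v \<in> Ysum n l m"
  shows "(\<Sum>i=1..n. \<Sum>j=1..n. voting n l v i j)
           \<ge> ((real l - real m) * real n - (real l)^2) * sqnorm n l v"
proof -
  let ?L = "lsubsets n l" and ?c = "(real l - real m) * real n - (real l)^2"
  obtain F a where F: "finite F" "F \<subseteq> (\<Union>s\<in>{0..m}. Ysp n l s)" "v = (\<lambda>x. \<Sum>y\<in>F. a y * y x)"
    using assms(4) unfolding Ysum_def fspan_def by blast
  define deg where "deg y = (SOME s. s \<in> {0..m} \<and> y \<in> Ysp n l s)" for y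
  have deg: "deg y \<in> {0..m} \<and> y \<in> Ysp n l (deg y)" if "y \<in> F" for y
    unfolding deg_def by (rule someI_ex) (use F(2) that in blast)
  have "2 * ?c * inner_on ?L v v \<le> inner_on ?L v (kernel_apply ?L (flip_count n) v)"
  proof (rule quadratic_form_ge_min_eigenvalue[OF flip_count_sym F(1) _ _ F(3)])
    fix y assume "y \<in> F"
    then show "eigenfun ?L (flip_count n) (2 * johnson_eigenvalue n l (deg y)) y"
      and "2 * ?c \<le> 2 * johnson_eigenvalue n l (deg y)"
      using deg Ysp_eigenfun johnson_eigenvalue_ge[of "deg y" m l n] by auto
  qed
  moreover have "inner_on ?L v v = sqnorm n l v"
    unfolding inner_on_def sqnorm_def by (simp add: power2_eq_square)
  ultimately show ?thesis
    unfolding voting_sum_eq_inner_on by (simp add: algebra_simps)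
qed

end
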